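(* Let $G=(V,E_1,\dots,E_k)$ be a complete $k$-edge-colored graph. Assume that for every $i\in\{1,\dots,k\}$ the monochromatic subgraph $G_{|i}$, together with some labeling $\ell_i$, is a simple permutation graph, and that the quotient graph $G[M]/\mathbb{P}_{\max}(M)$ of each strong prime module $M$ of $G$ with $|M|\ge 3$ is $2$-edge-colored. Then $G$ is a complete edge-colored permutation graph.
   Context: A complete $k$-edge-colored graph $G=(V,E_1,\dots,E_k)$ is the complete graph on a finite set $V$ with edges partitioned into $k$ nonempty color classes $E_i$ (the one-vertex graph also counts); $G_{|i}=(V,E_i)$. A labeling is a bijection $\ell:V\to\{1,\dots,|V|\}$. A graph $(V,E)$ with labeling $\ell$ is a simple permutation graph of a permutation $\pi$ if for all $u,v$ with $\ell(u)>\ell(v)$: $\{u,v\}\in E$ iff $\pi^{-1}(\ell(u))<\pi^{-1}(\ell(v))$. $G$ is a complete edge-colored permutation graph if there exist a single labeling $\ell$ and permutations $\pi_1,\dots,\pi_k$ with $(G_{|i},\ell)$ a simple permutation graph of $\pi_i$ for all $i$. A module is a set $M\subseteq V$ such that for every $v\notin M$ all edges $\{u,v\}$, $u\in M$, have the same color; a strong module is a nonempty module comparable by inclusion or disjoint with every other module. For a strong module $M$ with $|M|\ge2$, $\mathbb{P}_{\max}(M)$ is the set of inclusion-maximal strong modules properly contained in $M$, and $G[M]/\mathbb{P}_{\max}(M)$ is the complete graph on $\mathbb{P}_{\max}(M)$ with $\{M_a,M_b\}$ colored by the common color of all edges between $M_a$ and $M_b$; for $|M|=1$ it is the one-vertex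 graph. A strong module is series if its quotient graph has at least two vertices and all its edges have one color, and prime otherwise. *)

theory Defs
  imports Main
begin

text \<open>A complete k-edge-colored graph on vertex set V is given by a symmetric
  colouring function col: the edge {u,v} (u \<noteq> v) lies in colour class E_(col u v).
  Values of col on pairs outside V or on loops are irrelevant.\<close>

definition complete_k_edge_colored :: "'a set \<Rightarrow> nat \<Rightarrow> ('a \<Rightarrow> 'a \<Rightarrow> nat) \<Rightarrow> bool" where
  "complete_k_edge_colored V k col \<longleftrightarrow>
     finite V \<and> V \<noteq> {} \<and>
     (\<forall>u\<in>V. \<forall>v\<in>V. u \<noteq> v \<longrightarrow> col u v = col v u \<and> col u v \<in> {1..k}) \<and>
     (\<forall>i\<in>{1..k}. \<exists>u\<in>V. \<exists>v\<in>V. u \<noteq> v \<and> col u v = i)"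

definition is_labeling :: "'a set \<Rightarrow> ('a \<Rightarrow> nat) \<Rightarrow> bool" where
  "is_labeling V l \<longleftrightarrow> bij_betw l V {1..card V}"

definition simple_perm_graph ::
  "'a set \<Rightarrow> ('a \<Rightarrow> 'a \<Rightarrow> bool) \<Rightarrow> ('a \<Rightarrow> nat) \<Rightarrow> (nat \<Rightarrow> nat) \<Rightarrow> bool" where
  "simple_perm_graph V E l \<pi> \<longleftrightarrow>
     is_labeling V l \<and> bij_betw \<pi> {1..card V} {1..card V} \<and>
     (\<forall>u\<in>V. \<forall>v\<in>V. l u > l v \<longrightarrow>
        (E u v \<longleftrightarrow> inv_into {1..card V} \<pi> (l u) < inv_into {1..card V} \<pi> (l v)))"

definition color_edges :: "('a \<Rightarrow> 'a \<Rightarrow> nat) \<Rightarrow> nat \<Rightarrow> 'a \<Rightarrow> 'a \<Rightarrow> bool" where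
  "color_edges col i u v \<longleftrightarrow> u \<noteq> v \<and> col u v = i"

definition complete_edge_colored_perm_graph :: "'a set \<Rightarrow> nat \<Rightarrow> ('a \<Rightarrow> 'a \<Rightarrow> nat) \<Rightarrow> bool" where
  "complete_edge_colored_perm_graph V k col \<longleftrightarrow>
     (\<exists>l \<pi>. \<forall>i\<in>{1..k}. simple_perm_graph V (color_edges col i) l (\<pi> i))"

definition is_module :: "'a set \<Rightarrow> ('a \<Rightarrow> 'a \<Rightarrow> nat) \<Rightarrow> 'a set \<Rightarrow> bool" where
  "is_module V col M \<longleftrightarrow> M \<subseteq> V \<and>
     (\<forall>v\<in>V - M. \<forall>u\<in>M. \<forall>u'\<in>M. col u v = col u' v)"

definition strong_module :: "'a set \<Rightarrow> ('a \<Rightarrow> 'a \<Rightarrow> nat) \<Rightarrow> 'a set \<Rightarrow> bool" where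
  "strong_module V col M \<longleftrightarrow> is_module V col M \<and> M \<noteq> {} \<and>
     (\<forall>M'. is_module V col M' \<longrightarrow> M \<subseteq> M' \<or> M' \<subseteq> M \<or> M \<inter> M' = {})"

definition Pmax :: "'a set \<Rightarrow> ('a \<Rightarrow> 'a \<Rightarrow> nat) \<Rightarrow> 'a set \<Rightarrow> 'a set set" where
  "Pmax V col M = {M'. strong_module V col M' \<and> M' \<subset> M \<and>
     (\<forall>M''. strong_module V col M'' \<and> M'' \<subset> M \<longrightarrow> \<not> M' \<subset> M'')}"

text \<open>Colour of the edge {Ma,Mb} in the quotient graph: the common colour of the
  edges between Ma and Mb (represented by one pair of representatives).\<close>
definition quotient_color :: "('a \<Rightarrow> 'a \<Rightarrow> nat) \<Rightarrow> 'a set \<Rightarrow> 'a set \<Rightarrow> nat" where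
  "quotient_color col Ma Mb = col (SOME x. x \<in> Ma) (SOME y. y \<in> Mb)"

definition quotient_colors :: "'a set \<Rightarrow> ('a \<Rightarrow> 'a \<Rightarrow> nat) \<Rightarrow> 'a set \<Rightarrow> nat set" where
  "quotient_colors V col M = {c. \<exists>Ma\<in>Pmax V col M. \<exists>Mb\<in>Pmax V col M.
      Ma \<noteq> Mb \<and> c = quotient_color col Ma Mb}"

definition series_module :: "'a set \<Rightarrow> ('a \<Rightarrow> 'a \<Rightarrow> nat) \<Rightarrow> 'a set \<Rightarrow> bool" where
  "series_module V col M \<longleftrightarrow> strong_module V col M \<and> card M \<ge> 2 \<and>
     card (Pmax V col M) \<ge> 2 \<and> card (quotient_colors V col M) = 1"

definition prime_module :: "'a set \<Rightarrow> ('a \<Rightarrow> 'a \<Rightarrow> nat) \<Rightarrow> 'a set \<Rightarrow> bool" where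
  "prime_module V col M \<longleftrightarrow> strong_module V col M \<and> \<not> series_module V col M"

end

theory Submission
  imports Defs "HOL-Library.Disjoint_Sets"
begin

text \<open>It suffices to find one linear order L on V and, for every colour i, a linear order P_i
  such that an edge uv with L v < L u has colour i iff P_i u < P_i v. Such orders are built
  bottom-up along the modular decomposition. The quotient of a strong module S with at least two
  vertices uses at most two colours a and b: one if S is series, two by hypothesis if S is prime
  with at least three vertices, and a module with two vertices has a single quotient edge. The
  quotient is therefore realised by the orders of the permutation graph of colour a, restricted
  to one representative of each maximal strong submodule, with the reversed order for b and L
  itself for all other colours. The realisations of the maximal strong submodules are then
  combined lexicographically with that of the quotient, which is sound because all edges between
  two of them carry their quotient colour.\<close>

text \<open>Linear orders are encoded as injective functions into nat, of which only the relative order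
  of the values matters; (S, E) is the permutation graph of the pair of orders L, p when E relates
  exactly the pairs ordered differently by L and by p.\<close>

definition inversion_graph ::
  "'a set \<Rightarrow> ('a \<Rightarrow> nat) \<Rightarrow> ('a \<Rightarrow> nat) \<Rightarrow> ('a \<Rightarrow> 'a \<Rightarrow> bool) \<Rightarrow> bool" where
  "inversion_graph S L p E \<longleftrightarrow> inj_on L S \<and> inj_on p S \<and>
     (\<forall>u\<in>S. \<forall>v\<in>S. L v < L u \<longrightarrow> (E u v \<longleftrightarrow> p u < p v))"

definition inversion_coloring ::
  "'a set \<Rightarrow> ('a \<Rightarrow> nat) \<Rightarrow> (nat \<Rightarrow> 'a \<Rightarrow> nat) \<Rightarrow> ('a \<Rightarrow> 'a \<Rightarrow> nat) \<Rightarrow> bool" where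
  "inversion_coloring S L P col \<longleftrightarrow> (\<forall>i. inversion_graph S L (P i) (\<lambda>u v. col u v = i))"

lemma inversion_graph_cong:
  assumes "\<And>u v. u \<in> S \<Longrightarrow> v \<in> S \<Longrightarrow> u \<noteq> v \<Longrightarrow> E u v \<longleftrightarrow> E' u v"
  shows "inversion_graph S L p E \<longleftrightarrow> inversion_graph S L p E'"
  using assms unfolding inversion_graph_def by (metis less_irrefl)

lemma inversion_graph_reindex:
  assumes "inversion_graph S L p E" "inj_on h T" "h ` T \<subseteq> S"
  shows "inversion_graph T (L \<circ> h) (p \<circ> h) (\<lambda>x y. E (h x) (h y))"
  using assms unfolding inversion_graph_def by (auto intro: comp_inj_on inj_on_subset)

lemma inversion_coloring_singleton: "inversion_coloring {x} L P col"
  unfolding inversion_coloring_def inversion_graph_def by simp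

definition rank :: "('a \<Rightarrow> nat) \<Rightarrow> 'a set \<Rightarrow> 'a \<Rightarrow> nat" where
  "rank f S u = card {w\<in>S. f w < f u}"

lemma rank_less_card:
  assumes "finite S" "u \<in> S"
  shows "rank f S u < card S"
  unfolding rank_def using assms by (intro psubset_card_mono) auto

lemma rank_less_rank_iff:
  assumes "finite S" "inj_on f S" "u \<in> S" "v \<in> S"
  shows "rank f S u < rank f S v \<longleftrightarrow> f u < f v"
proof -
  have mono: "rank f S x < rank f S y" if "x \<in> S" "y \<in> S" "f x < f y" for x y
    unfolding rank_def using assms(1) that by (intro psubset_card_mono) auto
  show ?thesis
    using mono[of u v] mono[of v u] assms inj_on_eq_iff[OF assms(2)]
    by (metis less_asym linorder_neqE_nat)
qed

lemma inj_on_rank: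
  assumes "finite S" "inj_on f S"
  shows "inj_on (rank f S) S"
proof (rule inj_onI)
  fix u v assume uv: "u \<in> S" "v \<in> S" "rank f S u = rank f S v"
  then have "f u = f v"
    using rank_less_rank_iff[OF assms] by (metis less_irrefl linorder_neqE_nat)
  then show "u = v" using assms(2) uv(1,2) by (simp add: inj_on_eq_iff)
qed

lemma inversion_graph_rank:
  assumes "finite S" "inversion_graph S L p E"
  shows "inversion_graph S (rank L S) (rank p S) E"
  using assms inj_on_rank[OF assms(1)] rank_less_rank_iff[OF assms(1)]
  unfolding inversion_graph_def by simp

lemma inversion_coloring_rank:
  assumes "finite S" "inversion_coloring S L P col"
  shows "inversion_coloring S (rank L S) (\<lambda>i. rank (P i) S) col"
  using assms inversion_graph_rank unfolding inversion_coloring_def by blast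

lemma ex_reversed_order:
  fixes f :: "'a \<Rightarrow> nat"
  assumes "finite S" "inj_on f S"
  shows "\<exists>g :: 'a \<Rightarrow> nat. inj_on g S \<and> (\<forall>u\<in>S. \<forall>v\<in>S. g u < g v \<longleftrightarrow> f v < f u)"
proof -
  define g where "g u = Max (f ` S) - f u" for u
  have le: "f u \<le> Max (f ` S)" if "u \<in> S" for u
    using assms(1) that by simp
  have "\<forall>u\<in>S. \<forall>v\<in>S. g u < g v \<longleftrightarrow> f v < f u"
  proof (intro ballI)
    fix u v assume "u \<in> S" "v \<in> S"
    then show "g u < g v \<longleftrightarrow> f v < f u" using le unfolding g_def by fastforce
  qed
  moreover have "inj_on g S"
  proof (rule inj_onI)
    fix u v assume uv: "u \<in> S" "v \<in> S" "g u = g v"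
    then have "f u = f v" using le[OF uv(1)] le[OF uv(2)] unfolding g_def by linarith
    then show "u = v" using assms(2) uv(1,2) by (simp add: inj_on_eq_iff)
  qed
  ultimately show ?thesis by blast
qed

lemma inversion_coloring_two_colors:
  fixes col :: "'a \<Rightarrow> 'a \<Rightarrow> nat"
  assumes "finite S"
    and colors: "\<And>u v. u \<in> S \<Longrightarrow> v \<in> S \<Longrightarrow> u \<noteq> v \<Longrightarrow> col u v \<in> {a, b}"
    and a: "inversion_graph S L p (\<lambda>u v. col u v = a)"
  shows "\<exists>P. inversion_coloring S L P col"
proof -
  have injL: "inj_on L S" and injp: "inj_on p S" using a unfolding inversion_graph_def by blast+
  obtain q :: "'a \<Rightarrow> nat" where injq: "inj_on q S" and q: "\<And>u v. u \<in> S \<Longrightarrow> v \<in> S \<Longrightarrow> q u < q v \<longleftrightarrow> p v < p u"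
    using ex_reversed_order[OF assms(1) injp] by blast
  define P where "P i = (if i = a then p else if i = b then q else L)" for i
  have "inversion_graph S L (P i) (\<lambda>u v. col u v = i)" for i
  proof (cases "i = a")
    case True
    then show ?thesis using a unfolding P_def by simp
  next
    case False
    have "col u v = i \<longleftrightarrow> P i u < P i v" if uv: "u \<in> S" "v \<in> S" "L v < L u" for u v
    proof -
      have "u \<noteq> v" using uv(3) by blast
      show ?thesis
      proof (cases "i = b")
        case True
        have "col u v = b \<longleftrightarrow> \<not> p u < p v"
          using a uv colors[OF uv(1,2) \<open>u \<noteq> v\<close>] \<open>i \<noteq> a\<close> True
          unfolding inversion_graph_def by auto
        also have "\<dots> \<longleftrightarrow> q u < q v"
          using q[OF uv(1,2)] inj_on_eq_iff[OF injp uv(1,2)] \<open>u \<noteq> v\<close> by linarith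
        finally show ?thesis using True \<open>i \<noteq> a\<close> unfolding P_def by simp
      next
        case False
        then show ?thesis
          using colors[OF uv(1,2) \<open>u \<noteq> v\<close>] \<open>i \<noteq> a\<close> uv(3) unfolding P_def by auto
      qed
    qed
    then show ?thesis using False injL injq unfolding inversion_graph_def P_def by simp
  qed
  then show ?thesis unfolding inversion_coloring_def by blast
qed

lemma lex_less_iff:
  fixes a b x y n :: nat
  assumes "x < n" "y < n"
  shows "a * n + x < b * n + y \<longleftrightarrow> a < b \<or> (a = b \<and> x < y)"
proof -
  have less: "c * n + z < d * n + w" if "c < d" "z < n" for c d z w :: nat
  proof -
    have "c * n + z < Suc c * n" using that by simp
    also have "\<dots> \<le> d * n" using that by (intro mult_le_mono1) simp
    finally show ?thesis by simp
  qed
  show ?thesis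
    using less[of a b x y] less[of b a y x] assms by (cases a b rule: linorder_cases) auto
qed

lemma lex_map_less_iff:
  fixes fq :: "'b \<Rightarrow> nat" and f :: "'b \<Rightarrow> 'a \<Rightarrow> nat"
  assumes "inj_on fq (c ` S)" "u \<in> S" "v \<in> S" "f (c u) u < n" "f (c v) v < n"
  shows "fq (c u) * n + f (c u) u < fq (c v) * n + f (c v) v \<longleftrightarrow>
           fq (c u) < fq (c v) \<or> (c u = c v \<and> f (c u) u < f (c u) v)"
  using lex_less_iff[OF assms(4,5)] inj_on_eq_iff[OF assms(1)] assms(2,3) by auto

lemma inj_on_lex_map:
  fixes fq :: "'b \<Rightarrow> nat" and f :: "'b \<Rightarrow> 'a \<Rightarrow> nat"
  assumes "inj_on fq (c ` S)" "\<And>A. A \<in> c ` S \<Longrightarrow> inj_on (f A) {u\<in>S. c u = A}"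
    and "\<And>u. u \<in> S \<Longrightarrow> f (c u) u < n"
  shows "inj_on (\<lambda>u. fq (c u) * n + f (c u) u) S"
proof (rule inj_onI)
  fix u v assume uv: "u \<in> S" "v \<in> S" "fq (c u) * n + f (c u) u = fq (c v) * n + f (c v) v"
  have "\<not> fq (c u) < fq (c v)" "\<not> fq (c v) < fq (c u)"
    using lex_map_less_iff[where f = f and n = n, OF assms(1) uv(1,2) assms(3)[OF uv(1)]
        assms(3)[OF uv(2)]]
      lex_map_less_iff[where f = f and n = n, OF assms(1) uv(2,1) assms(3)[OF uv(2)]
        assms(3)[OF uv(1)]] uv(3)
    by auto
  then have "c u = c v" using inj_on_eq_iff[OF assms(1)] uv(1,2) by force
  then have "f (c u) u = f (c u) v" using uv(3) by simp
  then show "u = v" using assms(2)[of "c u"] uv(1,2) \<open>c u = c v\<close> by (simp add: inj_on_eq_iff)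
qed

lemma inversion_graph_lex:
  assumes quotient: "inversion_graph (c ` S) Lq pq Eq"
    and blocks: "\<And>A. A \<in> c ` S \<Longrightarrow> inversion_graph {u\<in>S. c u = A} (LL A) (pp A) E"
    and cross: "\<And>u v. u \<in> S \<Longrightarrow> v \<in> S \<Longrightarrow> c u \<noteq> c v \<Longrightarrow> E u v \<longleftrightarrow> Eq (c u) (c v)"
    and bound: "\<And>u. u \<in> S \<Longrightarrow> LL (c u) u < n \<and> pp (c u) u < n"
  shows "inversion_graph S (\<lambda>u. Lq (c u) * n + LL (c u) u) (\<lambda>u. pq (c u) * n + pp (c u) u) E"
proof -
  have injLq: "inj_on Lq (c ` S)" and injpq: "inj_on pq (c ` S)"
    using quotient unfolding inversion_graph_def by blast+
  have "E u v \<longleftrightarrow> pq (c u) * n + pp (c u) u < pq (c v) * n + pp (c v) v"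
    if uv: "u \<in> S" "v \<in> S" "Lq (c v) * n + LL (c v) v < Lq (c u) * n + LL (c u) u" for u v
  proof (cases "c u = c v")
    case True
    then have "LL (c u) v < LL (c u) u"
      using lex_map_less_iff[OF injLq uv(2,1)] bound uv by auto
    then have "E u v \<longleftrightarrow> pp (c u) u < pp (c u) v"
      using blocks[of "c u"] uv(1,2) True unfolding inversion_graph_def by auto
    then show ?thesis using lex_map_less_iff[OF injpq uv(1,2)] bound uv(1,2) True by auto
  next
    case False
    then have "Lq (c v) < Lq (c u)"
      using lex_map_less_iff[OF injLq uv(2,1)] bound uv by auto
    then have "Eq (c u) (c v) \<longleftrightarrow> pq (c u) < pq (c v)"
      using quotient uv(1,2) unfolding inversion_graph_def by blast
    then show ?thesis
      using cross[OF uv(1,2) False] lex_map_less_iff[OF injpq uv(1,2)] bound uv(1,2) False by auto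
  qed
  moreover have "inj_on (\<lambda>u. Lq (c u) * n + LL (c u) u) S"
    using blocks bound unfolding inversion_graph_def by (intro inj_on_lex_map[OF injLq]) auto
  moreover have "inj_on (\<lambda>u. pq (c u) * n + pp (c u) u) S"
    using blocks bound unfolding inversion_graph_def by (intro inj_on_lex_map[OF injpq]) auto
  ultimately show ?thesis unfolding inversion_graph_def by blast
qed

lemma inversion_coloring_lex:
  assumes "inversion_coloring (c ` S) Lq Pq qc"
    and "\<And>A. A \<in> c ` S \<Longrightarrow> inversion_coloring {u\<in>S. c u = A} (LL A) (PP A) col"
    and "\<And>u v. u \<in> S \<Longrightarrow> v \<in> S \<Longrightarrow> c u \<noteq> c v \<Longrightarrow> col u v = qc (c u) (c v)"
    and "\<And>u. u \<in> S \<Longrightarrow> LL (c u) u < n \<and> (\<forall>i. PP (c u) i u < n)"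
  shows "inversion_coloring S (\<lambda>u. Lq (c u) * n + LL (c u) u) (\<lambda>i u. Pq i (c u) * n + PP (c u) i u) col"
  unfolding inversion_coloring_def
proof
  fix i
  show "inversion_graph S (\<lambda>u. Lq (c u) * n + LL (c u) u) (\<lambda>u. Pq i (c u) * n + PP (c u) i u)
      (\<lambda>u v. col u v = i)"
    by (rule inversion_graph_lex[where Eq = "\<lambda>A B. qc A B = i"])
      (use assms in \<open>auto simp: inversion_coloring_def\<close>)
qed

lemma simple_perm_graph_inversion_graph:
  assumes "simple_perm_graph V E l \<pi>"
  shows "inversion_graph V l (\<lambda>u. inv_into {1..card V} \<pi> (l u)) E"
proof -
  have l: "bij_betw l V {1..card V}" and \<pi>: "bij_betw \<pi> {1..card V} {1..card V}"
    using assms unfolding simple_perm_graph_def is_labeling_def by blast+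
  have "inj_on (inv_into {1..card V} \<pi>) (l ` V)"
    using bij_betw_imp_inj_on[OF bij_betw_inv_into[OF \<pi>]] bij_betw_imp_surj_on[OF l] by simp
  then have "inj_on (inv_into {1..card V} \<pi> \<circ> l) V"
    by (rule comp_inj_on[OF bij_betw_imp_inj_on[OF l]])
  then show ?thesis
    using assms l unfolding simple_perm_graph_def inversion_graph_def bij_betw_def comp_def by blast
qed

lemma bij_betw_rank_label:
  assumes "finite S" "inj_on f S"
  shows "bij_betw (\<lambda>u. Suc (rank f S u)) S {1..card S}"
proof -
  have inj: "inj_on (\<lambda>u. Suc (rank f S u)) S"
    using inj_on_rank[OF assms] by (simp add: inj_on_def)
  moreover have "(\<lambda>u. Suc (rank f S u)) ` S \<subseteq> {1..card S}"
    using rank_less_card[OF assms(1)] by (auto simp: Suc_le_eq)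
  moreover have "card ((\<lambda>u. Suc (rank f S u)) ` S) = card {1..card S}"
    using card_image[OF inj] by simp
  ultimately show ?thesis unfolding bij_betw_def by (simp add: card_subset_eq)
qed

lemma simple_perm_graph_of_inversion_graph:
  assumes "finite V" "inversion_graph V L p E"
  shows "\<exists>\<pi>. simple_perm_graph V E (\<lambda>u. Suc (rank L V u)) \<pi>"
proof -
  define l where "l u = Suc (rank L V u)" for u
  define q where "q u = Suc (rank p V u)" for u
  define \<pi> where "\<pi> = l \<circ> inv_into V q"
  have injL: "inj_on L V" and injp: "inj_on p V"
    and E: "\<And>u v. u \<in> V \<Longrightarrow> v \<in> V \<Longrightarrow> L v < L u \<Longrightarrow> E u v \<longleftrightarrow> p u < p v"
    using assms(2) unfolding inversion_graph_def by blast+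
  have l: "bij_betw l V {1..card V}" and q: "bij_betw q V {1..card V}"
    unfolding l_def q_def using bij_betw_rank_label[OF assms(1)] injL injp by blast+
  have \<pi>: "bij_betw \<pi> {1..card V} {1..card V}"
    unfolding \<pi>_def using bij_betw_trans[OF bij_betw_inv_into[OF q] l] .
  have \<pi>_inv: "inv_into {1..card V} \<pi> (l u) = q u" if "u \<in> V" for u
    using \<pi> bij_betw_apply[OF q that] bij_betw_imp_inj_on[OF q] that
    unfolding \<pi>_def bij_betw_def by (simp add: inv_into_f_eq)
  have "E u v \<longleftrightarrow> inv_into {1..card V} \<pi> (l u) < inv_into {1..card V} \<pi> (l v)"
    if uv: "u \<in> V" "v \<in> V" "l v < l u" for u v
  proof -
    have "L v < L u" using uv(3) rank_less_rank_iff[OF assms(1) injL uv(2,1)] unfolding l_def by simp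
    then have "E u v \<longleftrightarrow> p u < p v" using E uv(1,2) by blast
    also have "\<dots> \<longleftrightarrow> q u < q v" using rank_less_rank_iff[OF assms(1) injp uv(1,2)] unfolding q_def by simp
    also have "\<dots> \<longleftrightarrow> inv_into {1..card V} \<pi> (l u) < inv_into {1..card V} \<pi> (l v)"
      using \<pi>_inv uv(1,2) by simp
    finally show ?thesis .
  qed
  then have "simple_perm_graph V E l \<pi>"
    unfolding simple_perm_graph_def is_labeling_def using l \<pi> by blast
  then show ?thesis unfolding l_def by blast
qed

lemma inversion_graph_color_edges:
  "inversion_graph S L p (color_edges col i) \<longleftrightarrow> inversion_graph S L p (\<lambda>u v. col u v = i)"
  by (rule inversion_graph_cong) (simp add: color_edges_def)

lemma inversion_coloring_perm_graph:
  assumes "finite V" "inversion_coloring V L P col"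
  shows "\<exists>l \<pi>. \<forall>i. simple_perm_graph V (color_edges col i) l (\<pi> i)"
proof -
  have "inversion_graph V L (P i) (color_edges col i)" for i
    using assms(2) unfolding inversion_coloring_def inversion_graph_color_edges by blast
  then have "\<forall>i. \<exists>\<pi>. simple_perm_graph V (color_edges col i) (\<lambda>u. Suc (rank L V u)) \<pi>"
    using simple_perm_graph_of_inversion_graph[OF assms(1)] by blast
  from choice[OF this] show ?thesis by (rule exI[where x = "\<lambda>u. Suc (rank L V u)"])
qed

lemma partition_on_block_map:
  assumes "partition_on S C"
  obtains c where "c ` S = C" "\<And>u. u \<in> S \<Longrightarrow> u \<in> c u" "\<And>A. A \<in> C \<Longrightarrow> {u\<in>S. c u = A} = A"
proof -
  have "\<forall>u\<in>S. \<exists>A\<in>C. u \<in> A" using partition_onD1[OF assms] by blast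
  then obtain c where c: "\<And>u. u \<in> S \<Longrightarrow> c u \<in> C \<and> u \<in> c u" by metis
  have fiber: "{u\<in>S. c u = A} = A" if "A \<in> C" for A
  proof
    show "{u\<in>S. c u = A} \<subseteq> A" using c by blast
    show "A \<subseteq> {u\<in>S. c u = A}"
    proof
      fix u assume "u \<in> A"
      then have "u \<in> S" using partition_onD1[OF assms] that by blast
      then have "c u = A"
        using c \<open>u \<in> A\<close> that partition_onD2[OF assms] by (meson disjnt_iff pairwise_def)
      then show "u \<in> {u\<in>S. c u = A}" using \<open>u \<in> S\<close> by blast
    qed
  qed
  have "c ` S = C"
  proof
    show "c ` S \<subseteq> C" using c by blast
    show "C \<subseteq> c ` S"
    proof
      fix A assume "A \<in> C"
      then obtain u where "u \<in> A" using partition_onD3[OF assms] by (metis all_not_in_conv)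
      then show "A \<in> c ` S" using fiber[OF \<open>A \<in> C\<close>] by blast
    qed
  qed
  then show ?thesis using that c fiber by blast
qed

lemma strong_module_subset: "strong_module V col S \<Longrightarrow> S \<subseteq> V"
  unfolding strong_module_def is_module_def by blast

lemma strong_module_nonempty: "strong_module V col S \<Longrightarrow> S \<noteq> {}"
  unfolding strong_module_def by blast

lemma strong_module_singleton: "x \<in> V \<Longrightarrow> strong_module V col {x}"
  unfolding strong_module_def is_module_def by auto

lemma strong_module_space: "V \<noteq> {} \<Longrightarrow> strong_module V col V"
  unfolding strong_module_def is_module_def by auto

lemma PmaxD:
  assumes "A \<in> Pmax V col S"
  shows "strong_module V col A" "A \<subset> S"
  using assms unfolding Pmax_def by blast+

lemma disjoint_Pmax: "disjoint (Pmax V col S)"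
proof (rule pairwiseI)
  fix A B assume AB: "A \<in> Pmax V col S" "B \<in> Pmax V col S" "A \<noteq> B"
  then have "A \<subseteq> B \<or> B \<subseteq> A \<or> A \<inter> B = {}"
    using PmaxD(1) unfolding strong_module_def by blast
  moreover have "\<not> A \<subset> B" "\<not> B \<subset> A"
    using AB PmaxD unfolding Pmax_def by blast+
  ultimately show "disjnt A B" using AB(3) disjnt_def by blast
qed

lemma some_in_Pmax:
  assumes "A \<in> Pmax V col S"
  shows "(SOME x. x \<in> A) \<in> A"
  using strong_module_nonempty[OF PmaxD(1)[OF assms]] by (simp add: some_in_eq)

lemma inj_on_some_Pmax: "inj_on (\<lambda>A. SOME x. x \<in> A) (Pmax V col S)"
proof (rule inj_onI)
  fix A B assume AB: "A \<in> Pmax V col S" "B \<in> Pmax V col S" "(SOME x. x \<in> A) = (SOME x. x \<in> B)"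
  show "A = B"
  proof (rule ccontr)
    assume "A \<noteq> B"
    then have "disjnt A B" using pairwiseD[OF disjoint_Pmax] AB(1,2) by blast
    then show False using some_in_Pmax[OF AB(1)] some_in_Pmax[OF AB(2)] AB(3) unfolding disjnt_def by auto
  qed
qed

lemma Union_Pmax:
  assumes "finite S" "strong_module V col S" "2 \<le> card S"
  shows "\<Union> (Pmax V col S) = S"
proof
  show "\<Union> (Pmax V col S) \<subseteq> S" using PmaxD(2) by blast
  show "S \<subseteq> \<Union> (Pmax V col S)"
  proof
    fix x assume "x \<in> S"
    define F where "F = {T. strong_module V col T \<and> T \<subset> S \<and> x \<in> T}"
    have "x \<in> V" using strong_module_subset[OF assms(2)] \<open>x \<in> S\<close> by blast
    have "S \<noteq> {x}" using assms(3) by auto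
    then have "{x} \<in> F"
      using strong_module_singleton[OF \<open>x \<in> V\<close>] \<open>x \<in> S\<close> unfolding F_def by blast
    moreover have "finite F"
      using assms(1) by (rule rev_finite_subset[OF finite_Pow_iff[THEN iffD2]]) (auto simp: F_def)
    ultimately obtain M where M: "M \<in> F" "\<forall>T\<in>F. M \<subseteq> T \<longrightarrow> M = T"
      using finite_has_maximal[of F] by blast
    then have "M \<in> Pmax V col S" unfolding Pmax_def F_def by blast
    then show "x \<in> \<Union> (Pmax V col S)" using M(1) unfolding F_def by blast
  qed
qed

lemma partition_on_Pmax:
  assumes "finite S" "strong_module V col S" "2 \<le> card S"
  shows "partition_on S (Pmax V col S)"
  using Union_Pmax[OF assms] disjoint_Pmax strong_module_nonempty[OF PmaxD(1)]
  unfolding partition_on_def by blast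

lemma quotient_colors_subset_edge_colors:
  "quotient_colors V col S \<subseteq> {col u v |u v. u \<in> S \<and> v \<in> S \<and> u \<noteq> v}"
proof
  fix c assume "c \<in> quotient_colors V col S"
  then obtain A B where AB: "A \<in> Pmax V col S" "B \<in> Pmax V col S" "A \<noteq> B"
    and c: "c = quotient_color col A B"
    unfolding quotient_colors_def by blast
  define x where "x = (SOME x. x \<in> A)"
  define y where "y = (SOME y. y \<in> B)"
  have "x \<in> A" "y \<in> B" unfolding x_def y_def using some_in_Pmax AB(1,2) by blast+
  moreover have "disjnt A B" using pairwiseD[OF disjoint_Pmax AB] .
  ultimately have "x \<in> S" "y \<in> S" "x \<noteq> y"
    using PmaxD(2)[OF AB(1)] PmaxD(2)[OF AB(2)] unfolding disjnt_def by blast+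
  moreover have "c = col x y" unfolding c quotient_color_def x_def y_def ..
  ultimately show "c \<in> {col u v |u v. u \<in> S \<and> v \<in> S \<and> u \<noteq> v}" by blast
qed

lemma finite_quotient_colors:
  assumes "finite S"
  shows "finite (quotient_colors V col S)"
proof -
  have "quotient_colors V col S \<subseteq> (\<lambda>(u, v). col u v) ` (S \<times> S)"
    using quotient_colors_subset_edge_colors by fast
  then show ?thesis using assms finite_subset by blast
qed

locale symmetric_coloring =
  fixes V :: "'a set" and col :: "'a \<Rightarrow> 'a \<Rightarrow> nat"
  assumes finite_V: "finite V"
    and col_sym: "\<And>u v. u \<in> V \<Longrightarrow> v \<in> V \<Longrightarrow> u \<noteq> v \<Longrightarrow> col u v = col v u"
begin

lemma finite_strong_module: "strong_module V col S \<Longrightarrow> finite S"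
  by (rule finite_subset[OF strong_module_subset finite_V])

lemma module_cross_color:
  assumes A: "is_module V col A" and B: "is_module V col B" and disj: "A \<inter> B = {}"
    and "x \<in> A" "x' \<in> A" "y \<in> B" "y' \<in> B"
  shows "col x y = col x' y'"
proof -
  have "A \<subseteq> V" "B \<subseteq> V" using A B unfolding is_module_def by blast+
  then have "y \<in> V - A" "x' \<in> V - B" "x' \<noteq> y" "x' \<noteq> y'" "x' \<in> V" "y \<in> V" "y' \<in> V"
    using assms(4-7) disj by blast+
  have "col x y = col x' y" using A \<open>y \<in> V - A\<close> assms(4,5) unfolding is_module_def by blast
  also have "\<dots> = col y x'" using col_sym \<open>x' \<in> V\<close> \<open>y \<in> V\<close> \<open>x' \<noteq> y\<close> by blast
  also have "\<dots> = col y' x'" using B \<open>x' \<in> V - B\<close> assms(6,7) unfolding is_module_def by blast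
  also have "\<dots> = col x' y'" using col_sym \<open>x' \<in> V\<close> \<open>y' \<in> V\<close> \<open>x' \<noteq> y'\<close> by metis
  finally show ?thesis .
qed

lemma quotient_color_eq:
  assumes "A \<in> Pmax V col S" "B \<in> Pmax V col S" "A \<noteq> B" "x \<in> A" "y \<in> B"
  shows "col x y = quotient_color col A B"
proof -
  have "(SOME x. x \<in> A) \<in> A" "(SOME y. y \<in> B) \<in> B"
    using assms(4,5) by (auto intro: someI)
  moreover have "A \<inter> B = {}" using pairwiseD[OF disjoint_Pmax assms(1-3)] unfolding disjnt_def .
  moreover have "is_module V col A" "is_module V col B"
    using PmaxD(1)[OF assms(1)] PmaxD(1)[OF assms(2)] unfolding strong_module_def by blast+
  ultimately show ?thesis
    unfolding quotient_color_def using module_cross_color[of A B x _ y] assms(4,5) by blast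
qed

lemma quotient_colors_nonempty:
  assumes "strong_module V col S" "2 \<le> card S"
  shows "quotient_colors V col S \<noteq> {}"
proof -
  have part: "partition_on S (Pmax V col S)"
    using partition_on_Pmax[OF finite_strong_module[OF assms(1)] assms] .
  obtain x where "x \<in> S" using strong_module_nonempty[OF assms(1)] by blast
  then obtain A where A: "A \<in> Pmax V col S" "x \<in> A" using partition_onD1[OF part] by blast
  then obtain y where "y \<in> S - A" using PmaxD(2) by blast
  then obtain B where B: "B \<in> Pmax V col S" "y \<in> B" using partition_onD1[OF part] by blast
  then have "A \<noteq> B" using \<open>y \<in> S - A\<close> by blast
  then have "quotient_color col A B \<in> quotient_colors V col S"
    unfolding quotient_colors_def using A(1) B(1) by blast
  then show ?thesis by blast
qed

lemma quotient_colors_two_vertices: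
  assumes "S = {x, y}" "x \<in> V" "y \<in> V"
  shows "quotient_colors V col S \<subseteq> {col x y}"
proof
  fix c assume "c \<in> quotient_colors V col S"
  then obtain u v where "u \<in> S" "v \<in> S" "u \<noteq> v" "c = col u v"
    using quotient_colors_subset_edge_colors by blast
  then have "(u = x \<and> v = y) \<or> (u = y \<and> v = x)" "x \<noteq> y" using assms(1) by blast+
  then show "c \<in> {col x y}" using col_sym[OF assms(3,2)] \<open>c = col u v\<close> by auto
qed

lemma quotient_colors_at_most_two:
  assumes prime: "\<And>M. strong_module V col M \<Longrightarrow> prime_module V col M \<Longrightarrow> 3 \<le> card M \<Longrightarrow>
      card (quotient_colors V col M) = 2"
    and S: "strong_module V col S" "2 \<le> card S"
  shows "\<exists>a b. a \<in> quotient_colors V col S \<and> quotient_colors V col S \<subseteq> {a, b}"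
proof -
  define Q where "Q = quotient_colors V col S"
  have "finite Q"
    unfolding Q_def using finite_quotient_colors[OF finite_strong_module[OF S(1)]] .
  have "Q \<noteq> {}" using quotient_colors_nonempty[OF S] unfolding Q_def .
  show ?thesis
  proof (cases "card Q \<le> 1")
    case True
    then have "card Q = 1" using \<open>finite Q\<close> \<open>Q \<noteq> {}\<close> card_0_eq by fastforce
    then obtain a where "Q = {a}" using card_1_singletonE by blast
    then show ?thesis unfolding Q_def by blast
  next
    case False
    have "3 \<le> card S"
    proof (rule ccontr)
      assume "\<not> 3 \<le> card S"
      then obtain x y where "S = {x, y}" using S(2) card_2_iff
        by (metis le_antisym not_less_eq_eq numeral_2_eq_2 numeral_3_eq_3)
      moreover have "x \<in> V" "y \<in> V" using strong_module_subset[OF S(1)] \<open>S = {x, y}\<close> by blast+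
      ultimately have "Q \<subseteq> {col x y}" unfolding Q_def by (rule quotient_colors_two_vertices)
      then have "card Q \<le> 1" using card_mono[of "{col x y}" Q] by simp
      then show False using False by blast
    qed
    moreover have "prime_module V col S"
      using S(1) False unfolding prime_module_def series_module_def Q_def by simp
    ultimately have "card Q = 2" using prime S(1) unfolding Q_def by blast
    then obtain a b where "Q = {a, b}" using card_2_iff by metis
    then show ?thesis unfolding Q_def by blast
  qed
qed

lemma quotient_inversion_coloring:
  assumes S: "strong_module V col S"
    and a: "simple_perm_graph V (color_edges col a) l \<pi>"
    and Q: "quotient_colors V col S \<subseteq> {a, b}"
  shows "\<exists>Lq Pq. inversion_coloring (Pmax V col S) Lq Pq (quotient_color col)"
proof -
  define C where "C = Pmax V col S"
  define rep where "rep A = (SOME x. x \<in> A)" for A :: "'a set"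
  have inj: "inj_on rep C" unfolding rep_def C_def by (rule inj_on_some_Pmax)
  have "rep ` C \<subseteq> V"
    using some_in_Pmax PmaxD(2) strong_module_subset[OF S] unfolding rep_def C_def by blast
  have "inversion_graph V l (\<lambda>u. inv_into {1..card V} \<pi> (l u)) (\<lambda>u v. col u v = a)"
    using simple_perm_graph_inversion_graph[OF a] unfolding inversion_graph_color_edges .
  moreover have qc: "quotient_color col A B = col (rep A) (rep B)" for A B
    unfolding quotient_color_def rep_def ..
  ultimately have graph: "inversion_graph C (l \<circ> rep) ((\<lambda>u. inv_into {1..card V} \<pi> (l u)) \<circ> rep)
      (\<lambda>A B. quotient_color col A B = a)"
    unfolding qc using inversion_graph_reindex[OF _ inj \<open>rep ` C \<subseteq> V\<close>] by blast
  have "C \<subseteq> Pow S" using PmaxD(2) unfolding C_def by blast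
  then have "finite C" using finite_strong_module[OF S] by (simp add: finite_subset)
  have colors: "quotient_color col A B \<in> {a, b}" if "A \<in> C" "B \<in> C" "A \<noteq> B" for A B
  proof -
    have "quotient_color col A B \<in> quotient_colors V col S"
      using that unfolding quotient_colors_def C_def by blast
    then show ?thesis using Q by blast
  qed
  obtain Pq where "inversion_coloring C (l \<circ> rep) Pq (quotient_color col)"
    using inversion_coloring_two_colors[OF \<open>finite C\<close> colors graph] by blast
  then show ?thesis unfolding C_def by blast
qed

lemma inversion_coloring_compose:
  assumes S: "strong_module V col S" "2 \<le> card S"
    and quotient: "inversion_coloring (Pmax V col S) Lq Pq (quotient_color col)"
    and children: "\<And>A. A \<in> Pmax V col S \<Longrightarrow> \<exists>L P. inversion_coloring A L P col"
  shows "\<exists>L P. inversion_coloring S L P col"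
proof -
  define C where "C = Pmax V col S"
  have "finite S" using finite_strong_module[OF S(1)] .
  have "\<forall>A\<in>C. \<exists>L P. inversion_coloring A L P col \<and> (\<forall>u\<in>A. L u < card S \<and> (\<forall>i. P i u < card S))"
  proof
    fix A assume "A \<in> C"
    then have A: "strong_module V col A" "A \<subset> S" using PmaxD unfolding C_def by blast+
    then have "card A < card S" using \<open>finite S\<close> psubset_card_mono by blast
    obtain L P where "inversion_coloring A L P col" using children \<open>A \<in> C\<close> unfolding C_def by blast
    then have "inversion_coloring A (rank L A) (\<lambda>i. rank (P i) A) col"
      using inversion_coloring_rank finite_strong_module[OF A(1)] by blast
    moreover have "\<forall>u\<in>A. rank L A u < card S \<and> (\<forall>i. rank (P i) A u < card S)"
      using rank_less_card[OF finite_strong_module[OF A(1)]] \<open>card A < card S\<close> less_trans by blast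
    ultimately show "\<exists>L P. inversion_coloring A L P col \<and> (\<forall>u\<in>A. L u < card S \<and> (\<forall>i. P i u < card S))"
      by blast
  qed
  then obtain LL PP where LL: "\<And>A. A \<in> C \<Longrightarrow> inversion_coloring A (LL A) (PP A) col"
    "\<And>A u. A \<in> C \<Longrightarrow> u \<in> A \<Longrightarrow> LL A u < card S \<and> (\<forall>i. PP A i u < card S)"
    by metis
  obtain c where c: "c ` S = C" "\<And>u. u \<in> S \<Longrightarrow> u \<in> c u" "\<And>A. A \<in> C \<Longrightarrow> {u\<in>S. c u = A} = A"
    using partition_on_block_map[OF partition_on_Pmax[OF \<open>finite S\<close> S]] unfolding C_def by blast
  have "inversion_coloring S (\<lambda>u. Lq (c u) * card S + LL (c u) u)
      (\<lambda>i u. Pq i (c u) * card S + PP (c u) i u) col"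
  proof (rule inversion_coloring_lex)
    show "inversion_coloring (c ` S) Lq Pq (quotient_color col)" using quotient c(1) C_def by simp
    show "inversion_coloring {u\<in>S. c u = A} (LL A) (PP A) col" if "A \<in> c ` S" for A
      using LL(1) c(1,3) that by simp
    show "col u v = quotient_color col (c u) (c v)" if "u \<in> S" "v \<in> S" "c u \<noteq> c v" for u v
      using quotient_color_eq[of "c u" S "c v" u v] c(1,2) that unfolding C_def by blast
    show "LL (c u) u < card S \<and> (\<forall>i. PP (c u) i u < card S)" if "u \<in> S" for u
      using LL(2) c(1,2) that by blast
  qed
  then show ?thesis by blast
qed

lemma strong_module_inversion_coloring:
  assumes perm: "\<And>u v. u \<in> V \<Longrightarrow> v \<in> V \<Longrightarrow> u \<noteq> v \<Longrightarrow>
      \<exists>l \<pi>. simple_perm_graph V (color_edges col (col u v)) l \<pi>"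
    and prime: "\<And>M. strong_module V col M \<Longrightarrow> prime_module V col M \<Longrightarrow> 3 \<le> card M \<Longrightarrow>
      card (quotient_colors V col M) = 2"
    and "strong_module V col S"
  shows "\<exists>L P. inversion_coloring S L P col"
  using assms(3)
proof (induction "card S" arbitrary: S rule: less_induct)
  case less
  show ?case
  proof (cases "card S < 2")
    case True
    then have "card S = 1"
      using finite_strong_module[OF less.prems] strong_module_nonempty[OF less.prems] card_0_eq
      by fastforce
    then obtain x where "S = {x}" using card_1_singletonE by blast
    then show ?thesis by (simp add: inversion_coloring_singleton)
  next
    case False
    then have "2 \<le> card S" by simp
    obtain a b where "a \<in> quotient_colors V col S" and Q: "quotient_colors V col S \<subseteq> {a, b}"
      using quotient_colors_at_most_two[OF prime less.prems \<open>2 \<le> card S\<close>] by blast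
    then obtain u v where "u \<in> S" "v \<in> S" "u \<noteq> v" "a = col u v"
      using quotient_colors_subset_edge_colors by blast
    then obtain l \<pi> where "simple_perm_graph V (color_edges col a) l \<pi>"
      using perm strong_module_subset[OF less.prems] by blast
    then obtain Lq Pq where "inversion_coloring (Pmax V col S) Lq Pq (quotient_color col)"
      using quotient_inversion_coloring[OF less.prems _ Q] by blast
    moreover have "\<exists>L P. inversion_coloring A L P col" if "A \<in> Pmax V col S" for A
      using less.hyps PmaxD[OF that] finite_strong_module[OF less.prems] psubset_card_mono by blast
    ultimately show ?thesis using inversion_coloring_compose[OF less.prems \<open>2 \<le> card S\<close>] by blast
  qed
qed

end

theorem lemma4p12:
  fixes V :: "'a set" and k :: nat and col :: "'a \<Rightarrow> 'a \<Rightarrow> nat"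
  assumes "complete_k_edge_colored V k col"
    and "\<forall>i\<in>{1..k}. \<exists>l \<pi>. simple_perm_graph V (color_edges col i) l \<pi>"
    and "\<forall>M. strong_module V col M \<and> prime_module V col M \<and> card M \<ge> 3
               \<longrightarrow> card (quotient_colors V col M) = 2"
  shows "complete_edge_colored_perm_graph V k col"
proof -
  have "finite V" "V \<noteq> {}"
    and colors: "\<And>u v. u \<in> V \<Longrightarrow> v \<in> V \<Longrightarrow> u \<noteq> v \<Longrightarrow> col u v = col v u \<and> col u v \<in> {1..k}"
    using assms(1) unfolding complete_k_edge_colored_def by blast+
  interpret symmetric_coloring V col
    using \<open>finite V\<close> colors by unfold_locales blast+
  obtain L P where "inversion_coloring V L P col"
    using strong_module_inversion_coloring[OF _ _ strong_module_space[OF \<open>V \<noteq> {}\<close>]]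
      assms(2,3) colors by blast
  then obtain l \<pi> where "\<forall>i. simple_perm_graph V (color_edges col i) l (\<pi> i)"
    using inversion_coloring_perm_graph[OF \<open>finite V\<close>] by blast
  then show ?thesis unfolding complete_edge_colored_perm_graph_def by blast
qed

end
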